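(* Let $\rho>0$ and assume $\Gamma(0)<\Gamma(1)$ and $1+\rho\ln\mu(0)<0$. Let $\nu_\star(\rho)$ be the unique solution in $(0,\mu(1))$ of $1+\rho\ln G(\nu,\mu(1))=0$. Then for every $\rho$-admissible scaling $n\mapsto L_n$, \[ \lim_{n\to\infty}\mathbb{E}[I_n(L_n)]=\begin{cases}\infty&\text{if } 1+\rho\ln\big(\Gamma(1)^{\nu_\star(\rho)}\Gamma(0)^{1-\nu_\star(\rho)}\big)<0,\\ 0&\text{if } 1+\rho\ln\big(\Gamma(1)^{\nu_\star(\rho)}\Gamma(0)^{1-\nu_\star(\rho)}\big)>0.\end{cases} \]
   Context: Homogeneous binary MAG model. Fix $\mu(0),\mu(1)\in(0,1)$ with $\mu(0)+\mu(1)=1$, and a symmetric $2\times2$ matrix $(q(a,b))$ with $q(0,1)=q(1,0)$ and $0<q(a,b)<1$. On a probability space, $\{A,A_\ell(u):\ell,u\ge1\}$ are i.i.d. $\{0,1\}$-valued with $\mathbb{P}[A=1]=\mu(1)$, independent of i.i.d. uniform$(0,1)$ variables $\{U(u,v):1\le u<v\}$, $U(v,u)=U(u,v)$. With $\mathbf A_L(u)=(A_1(u),\dots,A_L(u))$ and $Q_L(\mathbf a,\mathbf b)=\prod_{\ell=1}^Lq(a_\ell,b_\ell)$, the graph $\mathbb{M}(n;L)$ on $\{1,\dots,n\}$ has an edge between distinct $u,v$ iff $U(u,v)\le Q_L(\mathbf A_L(u),\mathbf A_L(v))$. $I_n(L)$ is the number of isolated nodes in $\mathbb{M}(n;L)$.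 $\Gamma(a)=\mathbb{E}[q(a,A)]$. A scaling $n\mapsto L_n$ of positive integers is $\rho$-admissible if $L_n\sim\rho\ln n$. For $0<\nu,\mu<1$, $G(\nu,\mu)=(\mu/\nu)^\nu\big((1-\mu)/(1-\nu)\big)^{1-\nu}$, extended continuously to $\nu\in[0,1]$ by $G(0,\mu)=1-\mu$, $G(1,\mu)=\mu$. *)

theory Defs
  imports "HOL-Probability.Probability" "HOL-Library.Landau_Symbols"
begin

text \<open>Binary MAG model. Attribute values are encoded as naturals 0 and 1.
  \<open>mu\<close> gives mu(0), mu(1); \<open>q\<close> is the 2x2 affinity matrix.\<close>

definition Gam :: "(nat \<Rightarrow> real) \<Rightarrow> (nat \<Rightarrow> nat \<Rightarrow> real) \<Rightarrow> nat \<Rightarrow> real" where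
  "Gam mu q a = mu 0 * q a 0 + mu 1 * q a 1"

definition G :: "real \<Rightarrow> real \<Rightarrow> real" where
  "G \<nu> m = (if \<nu> = 0 then 1 - m else if \<nu> = 1 then m
            else (m / \<nu>) powr \<nu> * ((1 - m) / (1 - \<nu>)) powr (1 - \<nu>))"

definition QL :: "(nat \<Rightarrow> nat \<Rightarrow> real) \<Rightarrow> (nat \<Rightarrow> nat \<Rightarrow> 'w \<Rightarrow> nat) \<Rightarrow> nat \<Rightarrow> nat \<Rightarrow> nat \<Rightarrow> 'w \<Rightarrow> real" where
  "QL q A L u v \<omega> = (\<Prod>l\<in>{1..L}. q (A l u \<omega>) (A l v \<omega>))"

text \<open>Edge between distinct u, v in M(n;L); U is only used for u < v (U(v,u) = U(u,v)).\<close>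
definition edge :: "(nat \<Rightarrow> nat \<Rightarrow> real) \<Rightarrow> (nat \<Rightarrow> nat \<Rightarrow> 'w \<Rightarrow> nat) \<Rightarrow> (nat \<Rightarrow> nat \<Rightarrow> 'w \<Rightarrow> real)
    \<Rightarrow> nat \<Rightarrow> nat \<Rightarrow> nat \<Rightarrow> 'w \<Rightarrow> bool" where
  "edge q A U L u v \<omega> = (u \<noteq> v \<and> U (min u v) (max u v) \<omega> \<le> QL q A L u v \<omega>)"

definition isolated_count :: "(nat \<Rightarrow> nat \<Rightarrow> real) \<Rightarrow> (nat \<Rightarrow> nat \<Rightarrow> 'w \<Rightarrow> nat) \<Rightarrow> (nat \<Rightarrow> nat \<Rightarrow> 'w \<Rightarrow> real)
    \<Rightarrow> nat \<Rightarrow> nat \<Rightarrow> 'w \<Rightarrow> nat" where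
  "isolated_count q A U n L \<omega> = card {u\<in>{1..n}. \<forall>v\<in>{1..n}. \<not> edge q A U L u v \<omega>}"

definition mag_family :: "(nat \<Rightarrow> nat \<Rightarrow> 'w \<Rightarrow> nat) \<Rightarrow> (nat \<Rightarrow> nat \<Rightarrow> 'w \<Rightarrow> real)
    \<Rightarrow> (nat \<times> nat) + (nat \<times> nat) \<Rightarrow> 'w \<Rightarrow> real" where
  "mag_family A U i = (case i of Inl (l, u) \<Rightarrow> (\<lambda>\<omega>. real (A l u \<omega>)) | Inr (u, v) \<Rightarrow> U u v)"

definition mag_index :: "((nat \<times> nat) + (nat \<times> nat)) set" where
  "mag_index = {Inl (l, u) | l u. 1 \<le> l \<and> 1 \<le> u} \<union> {Inr (u, v) | u v. 1 \<le> u \<and> u < v}"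

definition admissible :: "real \<Rightarrow> (nat \<Rightarrow> nat) \<Rightarrow> bool" where
  "admissible \<rho> L \<longleftrightarrow> (\<forall>n. 0 < L n) \<and> (\<lambda>n. real (L n)) \<sim>[sequentially] (\<lambda>n. \<rho> * ln (real n))"

end

theory Submission
  imports Defs "HOL-Real_Asymp.Real_Asymp"
begin

(* Conditioning on the attribute vector of a node u, the other n - 1 nodes are adjacent to u
   independently, each with probability Gamma(1)^k Gamma(0)^(L-k), where k is the number of
   attributes of u equal to 1. So the expected number of isolated nodes is
     n * (SUM k. C(L,k) mu(1)^k mu(0)^(L-k) (1 - Gamma(1)^k Gamma(0)^(L-k))^(n-1)).
   For L ~ rho ln n and k ~ x L, the binomial weight is n^(rho ln G(x, mu(1)) + o(1)) and n times
   the edge probability is n^(1 + rho ln (Gamma(1)^x Gamma(0)^(1-x)) + o(1)); at x = nu the first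
   exponent is -1. If the second exponent is negative at nu, a node with ceiling (x L) ones, x
   slightly above nu, is isolated with probability bounded below, and there are n^epsilon such
   nodes in expectation. If it is positive, Chernoff's bound makes nodes with at most x L ones,
   x slightly below nu, rarer than 1/n, while every other node has about n^a neighbours in
   expectation and is isolated with probability at most exp (- n^a). *)

section \<open>The function G and Bernstein weights\<close>

lemma G_pos:
  assumes "0 < x" "x < 1" "0 < m" "m < 1"
  shows "0 < G x m"
  using assms by (simp add: G_def)

lemma ln_G:
  assumes "0 < x" "x < 1" "0 < m" "m < 1"
  shows "ln (G x m) = x * ln (m / x) + (1 - x) * ln ((1 - m) / (1 - x))"
  using assms by (simp add: G_def ln_mult ln_powr)

(* ln (G x m) is minus the relative entropy of Bernoulli(x) with respect to Bernoulli(m). *)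
lemma ln_G_strict_mono:
  assumes "0 < a" "a < b" "b < m" "m < 1"
  shows "ln (G a m) < ln (G b m)"
proof -
  define f where "f x = x * ln m - x * ln x + (1 - x) * ln (1 - m) - (1 - x) * ln (1 - x)"
    for x :: real
  have f: "ln (G x m) = f x" if "0 < x" "x < m" for x
    using that assms by (simp add: ln_G f_def ln_div algebra_simps)
  have "f a < f b"
  proof (rule DERIV_pos_imp_increasing[OF assms(2)])
    fix x assume x: "a \<le> x" "x \<le> b"
    have "DERIV f x :> ln m - ln x - ln (1 - m) + ln (1 - x)"
      unfolding f_def using x assms by (auto intro!: derivative_eq_intros)
    moreover have "ln x < ln m" "ln (1 - m) < ln (1 - x)"
      using x assms by auto
    ultimately show "\<exists>y. DERIV f x :> y \<and> 0 < y"
      by (intro exI[of _ "ln m - ln x - ln (1 - m) + ln (1 - x)"]) auto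
  qed
  then show ?thesis
    using f[of a] f[of b] assms by simp
qed

lemma G_power:
  assumes "0 < k" "k < n" "0 < m" "m < 1"
  shows "G (k / n) m ^ n = (m / (k / n)) ^ k * ((1 - m) / (1 - k / n)) ^ (n - k)"
proof -
  define r :: real where "r = k / n"
  have r: "0 < r" "r < 1" "n * r = k" "n * (1 - r) = real (n - k)"
    using assms by (auto simp: r_def of_nat_diff algebra_simps)
  have "G r m ^ n = (m / r) powr (n * r) * ((1 - m) / (1 - r)) powr (n * (1 - r))"
    using r assms by (simp add: G_def power_mult_distrib powr_power)
  also have "\<dots> = (m / r) powr real k * ((1 - m) / (1 - r)) powr real (n - k)"
    by (simp only: r(3,4))
  also have "\<dots> = (m / r) ^ k * ((1 - m) / (1 - r)) ^ (n - k)"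
    using r assms by (simp add: powr_realpow del: of_nat_diff)
  finally show ?thesis
    by (simp add: r_def)
qed

lemma Bernstein_Suc_ratio:
  assumes "j < n"
  shows "Bernstein n (Suc j) p * Suc j * (1 - p) = Bernstein n j p * (n - j) * p"
proof -
  have binom: "real (n choose Suc j) * Suc j = real (n choose j) * (n - j)"
    using assms
    by (metis of_nat_mult binomial_absorb_comp binomial_absorption mult.commute)
  have pow: "(1 - p) ^ (n - Suc j) * (1 - p) = (1 - p) ^ (n - j)"
    using assms by (metis Suc_diff_Suc power_Suc2)
  have "Bernstein n (Suc j) p * Suc j * (1 - p)
      = (real (n choose Suc j) * Suc j) * p ^ j * p * ((1 - p) ^ (n - Suc j) * (1 - p))"
    unfolding Bernstein_def by (simp only: power_Suc mult_ac)
  also have "\<dots> = real (n choose j) * (n - j) * p ^ j * p * (1 - p) ^ (n - j)"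
    by (simp only: binom pow)
  also have "\<dots> = Bernstein n j p * (n - j) * p"
    unfolding Bernstein_def by (simp only: mult_ac)
  finally show ?thesis .
qed

lemma Bernstein_le_mode:
  assumes "0 < k" "k < n" "j \<le> n"
  shows "Bernstein n j (k / n) \<le> Bernstein n k (k / n)"
proof -
  define p :: real where "p = k / n"
  define B where "B j = Bernstein n j p" for j
  have p: "0 < p" "p < 1" "n * p = k"
    using assms by (auto simp: p_def)
  have B_nonneg: "0 \<le> B j" for j
    using p by (simp add: B_def Bernstein_nonneg)
  have ratio: "B (Suc j) * (Suc j * (1 - p)) = B j * ((n - j) * p)" if "j < n" for j
    using Bernstein_Suc_ratio[OF that, of p] by (simp add: B_def mult.assoc)
  have up: "B j \<le> B (Suc j)" if "j < k" for j
  proof -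
    have "Suc j * (1 - p) \<le> (n - j) * p"
      using that p assms by (simp add: of_nat_diff algebra_simps)
    then have "B j * ((n - j) * p) \<le> B (Suc j) * ((n - j) * p)"
      using ratio[of j] mult_left_mono[OF _ B_nonneg[of "Suc j"]] that assms by force
    moreover have "0 < (n - j) * p"
      using that assms p by simp
    ultimately show ?thesis
      by (meson mult_le_cancel_right_pos)
  qed
  have down: "B (Suc j) \<le> B j" if "k \<le> j" "j < n" for j
  proof -
    have "(n - j) * p \<le> Suc j * (1 - p)"
      using that p by (simp add: of_nat_diff algebra_simps)
    then have "B (Suc j) * (Suc j * (1 - p)) \<le> B j * (Suc j * (1 - p))"
      using ratio[of j] mult_left_mono[OF _ B_nonneg[of j]] that by (simp only:)
    moreover have "0 < Suc j * (1 - p)"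
      using p by simp
    ultimately show ?thesis
      by (meson mult_le_cancel_right_pos)
  qed
  have "B j \<le> B k"
  proof (cases "j \<le> k")
    case True
    then show ?thesis
      by (induction j rule: inc_induct) (use up order_trans in auto)
  next
    case False
    then have "k \<le> j"
      by simp
    then show ?thesis
      using assms(3) by (induction j rule: dec_induct) (auto intro: order_trans[OF down])
  qed
  then show ?thesis
    by (simp add: B_def p_def)
qed

lemma Bernstein_mode_ge:
  assumes "0 < k" "k < n"
  shows "1 / (n + 1) \<le> Bernstein n k (k / n)"
proof -
  have "1 = (\<Sum>j\<le>n. Bernstein n j (k / n))"
    by simp
  also have "\<dots> \<le> (\<Sum>j\<le>n. Bernstein n k (k / n))"
    by (intro sum_mono Bernstein_le_mode) (use assms in auto)
  finally show ?thesis
    by (simp add: field_simps)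
qed

lemma Bernstein_ge_G_power:
  assumes "0 < k" "k < n" "0 < m" "m < 1"
  shows "G (k / n) m ^ n / (n + 1) \<le> Bernstein n k m"
proof -
  define r :: real where "r = k / n"
  have r: "0 < r" "r < 1"
    using assms by (auto simp: r_def)
  have "Bernstein n k m = Bernstein n k r * ((m / r) ^ k * ((1 - m) / (1 - r)) ^ (n - k))"
    using r by (simp add: Bernstein_def power_divide)
  also have "\<dots> = Bernstein n k r * G r m ^ n"
    using G_power[OF assms] by (simp add: r_def)
  finally have B: "Bernstein n k m = Bernstein n k r * G r m ^ n" .
  have "G r m ^ n / (real n + 1) = 1 / (real n + 1) * G r m ^ n"
    by simp
  also have "\<dots> \<le> Bernstein n k r * G r m ^ n"
    using Bernstein_mode_ge[OF assms(1,2)] G_pos[OF r assms(3,4)]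
    by (intro mult_right_mono) (simp_all add: r_def add.commute)
  finally show ?thesis
    unfolding B by (simp only: r_def)
qed

(* Chernoff's bound: \<theta> minimises \<theta> powr (- \<nu> * n) * (\<theta> * m + 1 - m) ^ n over 0 < \<theta> \<le> 1,
   and the minimum is G \<nu> m ^ n. *)
lemma Bernstein_lower_tail_le:
  assumes "0 < \<nu>" "\<nu> < m" "m < 1"
  shows "(\<Sum>k\<in>{k\<in>{..n}. real k \<le> \<nu> * n}. Bernstein n k m) \<le> G \<nu> m ^ n"
proof -
  define \<theta> where "\<theta> = \<nu> * (1 - m) / ((1 - \<nu>) * m)"
  have \<theta>: "0 < \<theta>" "\<theta> < 1"
    using assms by (auto simp: \<theta>_def field_simps)
  have \<theta>m: "\<theta> * m + (1 - m) = (1 - m) / (1 - \<nu>)"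
    using assms by (simp add: \<theta>_def field_simps)
  have G: "G \<nu> m = \<theta> powr (- \<nu>) * (\<theta> * m + (1 - m))"
  proof (rule ln_inj_iff[THEN iffD1])
    show "0 < G \<nu> m" "0 < \<theta> powr (- \<nu>) * (\<theta> * m + (1 - m))"
      using assms \<theta> by (simp_all add: G_pos \<theta>m)
    have ln_\<theta>: "ln \<theta> = ln \<nu> + ln (1 - m) - ln (1 - \<nu>) - ln m"
      using assms by (simp add: \<theta>_def ln_div ln_mult)
    show "ln (G \<nu> m) = ln (\<theta> powr (- \<nu>) * (\<theta> * m + (1 - m)))"
      unfolding \<theta>m using assms \<theta> by (subst ln_mult) (simp_all add: ln_\<theta> ln_G ln_div ln_powr algebra_simps)
  qed
  have "(\<Sum>k\<in>{k\<in>{..n}. real k \<le> \<nu> * n}. Bernstein n k m)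
      \<le> (\<Sum>k\<in>{k\<in>{..n}. real k \<le> \<nu> * n}. Bernstein n k m * \<theta> powr (real k - \<nu> * n))"
  proof (intro sum_mono)
    fix k assume "k \<in> {k\<in>{..n}. real k \<le> \<nu> * n}"
    then have "0 \<le> (real k - \<nu> * n) * ln \<theta>"
      using \<theta> by (intro mult_nonpos_nonpos) auto
    then have "1 \<le> \<theta> powr (real k - \<nu> * n)"
      using \<theta> by (simp add: powr_def)
    then show "Bernstein n k m \<le> Bernstein n k m * \<theta> powr (real k - \<nu> * n)"
      using mult_left_mono[of 1 _ "Bernstein n k m"] Bernstein_nonneg[of m n k] assms by simp
  qed
  also have "\<dots> \<le> (\<Sum>k\<le>n. Bernstein n k m * \<theta> powr (real k - \<nu> * n))"
    using assms by (intro sum_mono2) (auto intro!: mult_nonneg_nonneg Bernstein_nonneg)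
  also have "\<dots> = (\<Sum>k\<le>n. \<theta> powr (- \<nu> * n) * (real (n choose k) * (\<theta> * m) ^ k * (1 - m) ^ (n - k)))"
  proof (intro sum.cong refl)
    fix k
    have "\<theta> powr (real k - \<nu> * n) = \<theta> ^ k * \<theta> powr (- \<nu> * n)"
      using \<theta> by (simp add: powr_realpow[symmetric] powr_add[symmetric])
    then show "Bernstein n k m * \<theta> powr (real k - \<nu> * n)
        = \<theta> powr (- \<nu> * n) * (real (n choose k) * (\<theta> * m) ^ k * (1 - m) ^ (n - k))"
      by (simp add: Bernstein_def power_mult_distrib mult_ac)
  qed
  also have "\<dots> = \<theta> powr (- \<nu> * n) * (\<theta> * m + (1 - m)) ^ n"
    by (simp only: sum_distrib_left[symmetric] binomial_ring)
  also have "\<dots> = G \<nu> m ^ n"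
    unfolding G power_mult_distrib using \<theta> by (simp add: powr_power mult.commute)
  finally show ?thesis .
qed

section \<open>Asymptotics of the mean number of isolated nodes\<close>

lemma isCont_obtain_right:
  fixes f :: "real \<Rightarrow> real"
  assumes "isCont f x" "f x < c" "x < b"
  obtains y where "x < y" "y < b" "f y < c"
proof -
  have "\<forall>\<^sub>F y in at_right x. f y < c"
    using tendsto_mono[OF at_within_le_at assms(1)[unfolded isCont_def]] assms(2)
    by (rule order_tendstoD)
  moreover have "\<forall>\<^sub>F y in at_right x. y \<in> {x<..<b}"
    using eventually_at_right_real[OF assms(3)] .
  ultimately have "\<forall>\<^sub>F y in at_right x. x < y \<and> y < b \<and> f y < c"
    by eventually_elim auto
  then show ?thesis
    using that eventually_happens'[OF trivial_limit_at_right_real] by blast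
qed

lemma isCont_obtain_left:
  fixes f :: "real \<Rightarrow> real"
  assumes "isCont f x" "c < f x" "a < x"
  obtains y where "a < y" "y < x" "c < f y"
proof -
  have "\<forall>\<^sub>F y in at_left x. c < f y"
    using tendsto_mono[OF at_within_le_at assms(1)[unfolded isCont_def]] assms(2)
    by (rule order_tendstoD)
  moreover have "\<forall>\<^sub>F y in at_left x. y \<in> {a<..<x}"
    using eventually_at_left_real[OF assms(3)] .
  ultimately have "\<forall>\<^sub>F y in at_left x. a < y \<and> y < x \<and> c < f y"
    by eventually_elim auto
  then show ?thesis
    using that eventually_happens'[OF trivial_limit_at_left_real] by blast
qed

lemma filterlim_at_top_if_ratio_tendsto:
  fixes f g :: "'a \<Rightarrow> real"
  assumes "((\<lambda>x. f x / g x) \<longlongrightarrow> c) F" "0 < c" "filterlim g at_top F"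
  shows "filterlim f at_top F"
proof -
  have "\<forall>\<^sub>F x in F. 0 < g x"
    using assms(3) unfolding filterlim_at_top_dense by blast
  then have "\<forall>\<^sub>F x in F. f x / g x * g x = f x"
    by eventually_elim simp
  then show ?thesis
    using filterlim_tendsto_pos_mult_at_top[OF assms] filterlim_cong by fastforce
qed

lemma filterlim_at_bot_if_ratio_tendsto:
  fixes f g :: "'a \<Rightarrow> real"
  assumes "((\<lambda>x. f x / g x) \<longlongrightarrow> c) F" "c < 0" "filterlim g at_top F"
  shows "filterlim f at_bot F"
proof -
  have "\<forall>\<^sub>F x in F. 0 < g x"
    using assms(3) unfolding filterlim_at_top_dense by blast
  then have "\<forall>\<^sub>F x in F. f x / g x * g x = f x"
    by eventually_elim simp
  then show ?thesis
    using filterlim_tendsto_neg_mult_at_bot[OF assms] filterlim_cong by fastforce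
qed

lemma filterlim_ln_real_at_top: "filterlim (\<lambda>n. ln (real n)) at_top sequentially"
  by real_asymp

lemma exp_tendsto_0_if_ratio_ln_neg:
  assumes "(\<lambda>n. f n / ln (real n)) \<longlonglongrightarrow> c" "c < 0"
  shows "(\<lambda>n. exp (f n)) \<longlonglongrightarrow> 0"
  using filterlim_compose[OF exp_at_bot
      filterlim_at_bot_if_ratio_tendsto[OF assms filterlim_ln_real_at_top]] .

lemma exp_at_top_if_ratio_ln_pos:
  assumes "(\<lambda>n. f n / ln (real n)) \<longlonglongrightarrow> c" "0 < c"
  shows "filterlim (\<lambda>n. exp (f n)) at_top sequentially"
  using filterlim_compose[OF exp_at_top
      filterlim_at_top_if_ratio_tendsto[OF assms filterlim_ln_real_at_top]] .

lemma tendsto_ceiling_ratio: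
  fixes f :: "'a \<Rightarrow> real"
  assumes "filterlim f at_top F" "0 \<le> x"
  shows "((\<lambda>y. real (nat \<lceil>x * f y\<rceil>) / f y) \<longlongrightarrow> x) F"
proof (rule tendsto_sandwich)
  have pos: "\<forall>\<^sub>F y in F. 0 < f y"
    using assms(1) unfolding filterlim_at_top_dense by blast
  have ceil: "x * f y \<le> real (nat \<lceil>x * f y\<rceil>)" "real (nat \<lceil>x * f y\<rceil>) \<le> x * f y + 1"
    if "0 < f y" for y
    using that assms(2) of_int_ceiling_le_add_one[of "x * f y"] by auto
  show "\<forall>\<^sub>F y in F. x \<le> real (nat \<lceil>x * f y\<rceil>) / f y"
    using pos by eventually_elim (use ceil in \<open>simp add: pos_le_divide_eq\<close>)
  show "\<forall>\<^sub>F y in F. real (nat \<lceil>x * f y\<rceil>) / f y \<le> x + 1 / f y"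
    using pos by eventually_elim (use ceil in \<open>simp add: pos_divide_le_eq distrib_right\<close>)
  show "((\<lambda>y. x) \<longlongrightarrow> x) F"
    by simp
  show "((\<lambda>y. x + 1 / f y) \<longlongrightarrow> x) F"
    using tendsto_add[OF tendsto_const tendsto_divide_0[OF tendsto_const
          filterlim_at_top_imp_at_infinity[OF assms(1)]]] by simp
qed

lemma admissible_ratio_tendsto:
  assumes "admissible \<rho> L" "0 < \<rho>"
  shows "(\<lambda>n. real (L n) / ln (real n)) \<longlonglongrightarrow> \<rho>"
proof -
  have "((\<lambda>n. real (L n) / (\<rho> * ln (real n))) \<longlongrightarrow> 1) sequentially"
    using assms(1) unfolding admissible_def by (intro asymp_equivD_strong) auto
  then have "(\<lambda>n. \<rho> * (real (L n) / (\<rho> * ln (real n)))) \<longlonglongrightarrow> \<rho> * 1"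
    by (intro tendsto_mult tendsto_const)
  then show ?thesis
    using assms(2) by simp
qed

lemma exp_le_power_prod:
  fixes g0 g1 \<nu> :: real and k L :: nat
  assumes "0 < g0" "g0 \<le> g1" "\<nu> * L \<le> k" "k \<le> L"
  shows "exp (L * (\<nu> * ln g1 + (1 - \<nu>) * ln g0)) \<le> g1 ^ k * g0 ^ (L - k)"
proof -
  have "L * (\<nu> * ln g1 + (1 - \<nu>) * ln g0) = L * ln g0 + \<nu> * L * (ln g1 - ln g0)"
    by (simp add: algebra_simps)
  also have "\<dots> \<le> L * ln g0 + k * (ln g1 - ln g0)"
    using assms by (intro add_left_mono mult_right_mono) auto
  also have "\<dots> = k * ln g1 + (L - k) * ln g0"
    using assms by (simp add: of_nat_diff algebra_simps)
  finally have "exp (L * (\<nu> * ln g1 + (1 - \<nu>) * ln g0)) \<le> exp (k * ln g1 + (L - k) * ln g0)"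
    by simp
  also have "\<dots> = g1 ^ k * g0 ^ (L - k)"
    using assms by (simp add: exp_add exp_of_nat_mult del: of_nat_diff)
  finally show ?thesis .
qed

(* With k attributes equal to 1, a node is adjacent to each of the n - 1 others independently
   with probability g1 ^ k * g0 ^ (L - k); see integral_isolated_count. *)
definition isolated_mean :: "real \<Rightarrow> real \<Rightarrow> real \<Rightarrow> nat \<Rightarrow> nat \<Rightarrow> real" where
  "isolated_mean m g0 g1 n L =
     real n * (\<Sum>k\<le>L. Bernstein L k m * (1 - g1 ^ k * g0 ^ (L - k)) ^ (n - 1))"

lemma isolated_mean_nonneg:
  assumes "0 \<le> m" "m \<le> 1" "0 \<le> g0" "g0 \<le> 1" "0 \<le> g1" "g1 \<le> 1"
  shows "0 \<le> isolated_mean m g0 g1 n L"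
  unfolding isolated_mean_def using assms
  by (intro mult_nonneg_nonneg sum_nonneg zero_le_power Bernstein_nonneg)
    (auto intro!: mult_le_one power_le_one)

lemma isolated_mean_ge:
  assumes "0 < m" "m < 1" "0 \<le> g0" "g0 \<le> 1" "0 \<le> g1" "g1 \<le> 1" "0 < k" "k < L"
    and small: "real n * (g1 ^ k * g0 ^ (L - k)) \<le> 1 / 2"
  shows "real n * G (k / L) m ^ L / (real L + 1) / 2 \<le> isolated_mean m g0 g1 n L"
proof -
  define p where "p = g1 ^ k * g0 ^ (L - k)"
  have p: "0 \<le> p" "p \<le> 1"
    using assms by (auto simp: p_def intro!: mult_le_one power_le_one)
  have "real (n - 1) * p \<le> real n * p"
    using p by (intro mult_right_mono) auto
  then have "1 / 2 \<le> 1 + real (n - 1) * (- p)"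
    using small by (simp add: p_def)
  also have "\<dots> \<le> (1 - p) ^ (n - 1)"
    using Bernoulli_inequality[of "- p" "n - 1"] p by simp
  finally have half: "1 / 2 \<le> (1 - p) ^ (n - 1)" .
  have "G (k / L) m ^ L / (real L + 1) * (1 / 2) \<le> Bernstein L k m * (1 - p) ^ (n - 1)"
    by (rule mult_mono[OF Bernstein_ge_G_power[OF assms(7,8,1,2)] half])
      (use assms in \<open>auto intro: Bernstein_nonneg\<close>)
  then have "real n * (G (k / L) m ^ L / (real L + 1) * (1 / 2))
      \<le> real n * (Bernstein L k m * (1 - p) ^ (n - 1))"
    by (rule mult_left_mono) simp
  also have "\<dots> \<le> isolated_mean m g0 g1 n L"
    unfolding isolated_mean_def p_def using assms
    by (intro mult_left_mono member_le_sum mult_nonneg_nonneg zero_le_power Bernstein_nonneg)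
      (auto intro!: mult_le_one power_le_one)
  finally show ?thesis
    by simp
qed

lemma isolated_mean_le:
  assumes "0 < \<nu>" "\<nu> < m" "m < 1" "0 < g0" "g0 \<le> g1" "g1 \<le> 1"
  shows "isolated_mean m g0 g1 n L \<le> real n * G \<nu> m ^ L
           + real n * exp (- real (n - 1) * exp (L * (\<nu> * ln g1 + (1 - \<nu>) * ln g0)))"
proof -
  define \<pi> where "\<pi> = exp (L * (\<nu> * ln g1 + (1 - \<nu>) * ln g0))"
  define \<epsilon> where "\<epsilon> = exp (- real (n - 1) * \<pi>)"
  define P where "P k \<longleftrightarrow> real k \<le> \<nu> * L" for k
  have term_le: "(1 - g1 ^ k * g0 ^ (L - k)) ^ (n - 1) \<le> (if P k then 1 else \<epsilon>)"
    if "k \<le> L" for k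
  proof -
    have p: "0 \<le> 1 - g1 ^ k * g0 ^ (L - k)" "1 - g1 ^ k * g0 ^ (L - k) \<le> 1"
      using assms by (auto intro!: mult_le_one power_le_one)
    show ?thesis
    proof (cases "P k")
      case True
      then show ?thesis
        using p by (simp add: power_le_one)
    next
      case False
      then have "\<pi> \<le> g1 ^ k * g0 ^ (L - k)"
        unfolding \<pi>_def using that assms by (intro exp_le_power_prod) (auto simp: P_def)
      then have "1 - g1 ^ k * g0 ^ (L - k) \<le> exp (- \<pi>)"
        using exp_ge_add_one_self[of "- \<pi>"] by simp
      then have "(1 - g1 ^ k * g0 ^ (L - k)) ^ (n - 1) \<le> exp (- \<pi>) ^ (n - 1)"
        using p by (intro power_mono) auto
      then show ?thesis
        using False by (simp add: \<epsilon>_def exp_of_nat_mult[symmetric])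
    qed
  qed
  have "(\<Sum>k\<le>L. Bernstein L k m * (1 - g1 ^ k * g0 ^ (L - k)) ^ (n - 1))
      \<le> (\<Sum>k\<le>L. Bernstein L k m * (if P k then 1 else \<epsilon>))"
    using assms by (intro sum_mono mult_left_mono term_le Bernstein_nonneg) auto
  also have "\<dots> \<le> (\<Sum>k\<le>L. (if P k then Bernstein L k m else 0) + \<epsilon> * Bernstein L k m)"
    using assms by (intro sum_mono) (auto simp: \<epsilon>_def intro!: mult_nonneg_nonneg Bernstein_nonneg)
  also have "\<dots> = (\<Sum>k\<in>{k\<in>{..L}. P k}. Bernstein L k m) + \<epsilon>"
    by (simp add: sum.distrib sum_distrib_left[symmetric] flip: sum.inter_filter)
  also have "\<dots> \<le> G \<nu> m ^ L + \<epsilon>"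
    using Bernstein_lower_tail_le[OF assms(1-3)] by (simp add: P_def)
  finally show ?thesis
    unfolding isolated_mean_def \<epsilon>_def \<pi>_def
    by (simp add: mult_left_mono flip: distrib_left)
qed

context
  fixes m g0 g1 \<rho> \<nu> :: real and L :: "nat \<Rightarrow> nat"
  assumes m: "0 < m" "m < 1"
    and g: "0 < g0" "g0 < g1" "g1 < 1"
    and \<rho>: "0 < \<rho>"
    and \<nu>: "0 < \<nu>" "\<nu> < m" "1 + \<rho> * ln (G \<nu> m) = 0"
    and L: "(\<lambda>n. real (L n) / ln (real n)) \<longlonglongrightarrow> \<rho>"
begin

lemma L_at_top: "filterlim (\<lambda>n. real (L n)) at_top sequentially"
  using filterlim_at_top_if_ratio_tendsto[OF L \<rho> filterlim_ln_real_at_top] .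

lemma L_pos_eventually: "\<forall>\<^sub>F n in sequentially. 0 < real (L n)"
  using L_at_top unfolding filterlim_at_top_dense by blast

lemma ratio_ln_plus_L_mult:
  assumes "c \<longlonglongrightarrow> c0"
  shows "(\<lambda>n. (ln (real n) + real (L n) * c n) / ln (real n)) \<longlonglongrightarrow> 1 + \<rho> * c0"
proof -
  have "(\<lambda>n. 1 + real (L n) / ln (real n) * c n) \<longlonglongrightarrow> 1 + \<rho> * c0"
    by (intro tendsto_intros L assms)
  moreover have "\<forall>\<^sub>F n in sequentially.
      1 + real (L n) / ln (real n) * c n = (ln (real n) + real (L n) * c n) / ln (real n)"
    using eventually_gt_at_top[of "1::nat"] by eventually_elim (simp add: field_simps)
  ultimately show ?thesis
    by (rule Lim_transform_eventually)
qed

lemma ln_L_ratio_tendsto_0: "(\<lambda>n. ln (real (L n) + 1) / ln (real n)) \<longlonglongrightarrow> 0"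
proof -
  have "((\<lambda>x::real. ln (x + 1) / (x + 1)) \<longlongrightarrow> 0) at_top"
    by real_asymp
  then have "(\<lambda>n. ln (real (L n) + 1) / (real (L n) + 1)) \<longlonglongrightarrow> 0"
    using L_at_top by (rule filterlim_compose)
  moreover have "(\<lambda>n. real (L n) / ln (real n) + 1 / ln (real n)) \<longlonglongrightarrow> \<rho> + 0"
    by (intro tendsto_add L tendsto_divide_0[OF tendsto_const]
        filterlim_at_top_imp_at_infinity filterlim_ln_real_at_top)
  ultimately have "(\<lambda>n. ln (real (L n) + 1) / (real (L n) + 1) * ((real (L n) + 1) / ln (real n)))
      \<longlonglongrightarrow> 0 * (\<rho> + 0)"
    unfolding add_divide_distrib by (rule tendsto_mult)
  then show ?thesis
    by (simp add: add_pos_nonneg)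
qed

lemma n_times_power_tendsto_0:
  assumes "0 < y" "1 + \<rho> * ln y < 0"
  shows "(\<lambda>n. real n * y ^ L n) \<longlonglongrightarrow> 0"
proof -
  have "(\<lambda>n. exp (ln (real n) + real (L n) * ln y)) \<longlonglongrightarrow> 0"
    by (rule exp_tendsto_0_if_ratio_ln_neg[OF ratio_ln_plus_L_mult[OF tendsto_const] assms(2)])
  moreover have "\<forall>\<^sub>F n in sequentially. exp (ln (real n) + real (L n) * ln y) = real n * y ^ L n"
    using eventually_gt_at_top[of "0::nat"]
    by eventually_elim (use assms in \<open>simp add: exp_add exp_of_nat_mult\<close>)
  ultimately show ?thesis
    by (rule Lim_transform_eventually)
qed

lemma n_times_exp_neg_tendsto_0:
  fixes w :: real
  assumes "0 < 1 + \<rho> * w"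
  shows "(\<lambda>n. real n * exp (- real (n - 1) * exp (L n * w))) \<longlonglongrightarrow> 0"
proof (rule tendsto_sandwich)
  define a where "a = (1 + \<rho> * w) / 2"
  have a: "0 < a" "a < 1 + \<rho> * w"
    using assms by (auto simp: a_def)
  have "\<forall>\<^sub>F n in sequentially. a < (ln (real n) + real (L n) * w) / ln (real n)"
    using order_tendstoD(1)[OF ratio_ln_plus_L_mult[OF tendsto_const] a(2)] .
  then have "\<forall>\<^sub>F n in sequentially. real n powr a / 2 \<le> real (n - 1) * exp (L n * w)"
    using eventually_ge_at_top[of "2::nat"]
  proof eventually_elim
    case (elim n)
    then have "a * ln (real n) \<le> ln (real n) + real (L n) * w"
      by (simp add: field_simps)
    then have "exp (a * ln (real n)) \<le> exp (ln (real n) + real (L n) * w)"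
      by simp
    then have "real n powr a \<le> real n * exp (L n * w)"
      using elim by (simp add: powr_def exp_add)
    then have "real n powr a / 2 \<le> real n / 2 * exp (L n * w)"
      by simp
    also have "\<dots> \<le> real (n - 1) * exp (L n * w)"
      using elim by (intro mult_right_mono) (simp_all add: of_nat_diff)
    finally show ?case .
  qed
  then show "\<forall>\<^sub>F n in sequentially.
      real n * exp (- real (n - 1) * exp (L n * w)) \<le> real n * exp (- (real n powr a / 2))"
    by eventually_elim (intro mult_left_mono; simp)
  show "\<forall>\<^sub>F n in sequentially. 0 \<le> real n * exp (- real (n - 1) * exp (L n * w))"
    by simp
  show "(\<lambda>n. 0) \<longlonglongrightarrow> 0"
    by simp
  show "(\<lambda>n. real n * exp (- (real n powr a / 2))) \<longlonglongrightarrow> 0"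
    using a(1) by real_asymp
qed

lemma n_times_edge_prob_tendsto_0:
  assumes k: "(\<lambda>n. real (k n) / real (L n)) \<longlonglongrightarrow> x"
    and x: "1 + \<rho> * (x * ln g1 + (1 - x) * ln g0) < 0"
    and kL: "\<forall>\<^sub>F n in sequentially. k n \<le> L n"
  shows "(\<lambda>n. real n * (g1 ^ k n * g0 ^ (L n - k n))) \<longlonglongrightarrow> 0"
proof -
  define r where "r n = real (k n) / real (L n)" for n
  have "(\<lambda>n. r n * ln g1 + (1 - r n) * ln g0) \<longlonglongrightarrow> x * ln g1 + (1 - x) * ln g0"
    unfolding r_def by (intro tendsto_intros k)
  then have "(\<lambda>n. exp (ln (real n) + real (L n) * (r n * ln g1 + (1 - r n) * ln g0))) \<longlonglongrightarrow> 0"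
    by (intro exp_tendsto_0_if_ratio_ln_neg[OF ratio_ln_plus_L_mult x])
  moreover have "\<forall>\<^sub>F n in sequentially.
      exp (ln (real n) + real (L n) * (r n * ln g1 + (1 - r n) * ln g0))
      = real n * (g1 ^ k n * g0 ^ (L n - k n))"
    using kL eventually_gt_at_top[of "0::nat"] L_pos_eventually
  proof eventually_elim
    case (elim n)
    then have "real (L n) * (r n * ln g1 + (1 - r n) * ln g0) = k n * ln g1 + (L n - k n) * ln g0"
      by (simp add: r_def of_nat_diff field_simps)
    then show ?case
      using elim g by (simp add: exp_add exp_of_nat_mult del: of_nat_diff)
  qed
  ultimately show ?thesis
    by (rule Lim_transform_eventually)
qed

lemma n_times_G_power_at_top:
  assumes k: "(\<lambda>n. real (k n) / real (L n)) \<longlonglongrightarrow> x"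
    and x: "0 < x" "x < 1" "0 < 1 + \<rho> * ln (G x m)"
  shows "filterlim (\<lambda>n. real n * G (k n / L n) m ^ L n / (real (L n) + 1) / 2) at_top sequentially"
proof -
  define r where "r n = real (k n) / real (L n)" for n
  have r01: "\<forall>\<^sub>F n in sequentially. 0 < r n \<and> r n < 1"
    using k x unfolding r_def by (auto intro!: eventually_conj order_tendstoD)
  have "(\<lambda>n. r n * ln (m / r n) + (1 - r n) * ln ((1 - m) / (1 - r n)))
      \<longlonglongrightarrow> x * ln (m / x) + (1 - x) * ln ((1 - m) / (1 - x))"
    unfolding r_def using x m by (intro tendsto_intros k) auto
  moreover have "\<forall>\<^sub>F n in sequentially.
      r n * ln (m / r n) + (1 - r n) * ln ((1 - m) / (1 - r n)) = ln (G (r n) m)"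
    using r01 by eventually_elim (use m in \<open>simp add: ln_G\<close>)
  ultimately have "(\<lambda>n. ln (G (r n) m)) \<longlonglongrightarrow> ln (G x m)"
    using x m by (simp add: ln_G Lim_transform_eventually)
  then have "(\<lambda>n. (ln (real n) + real (L n) * ln (G (r n) m)) / ln (real n)
      - ln (real (L n) + 1) / ln (real n)) \<longlonglongrightarrow> 1 + \<rho> * ln (G x m) - 0"
    by (intro tendsto_diff ratio_ln_plus_L_mult ln_L_ratio_tendsto_0)
  then have "filterlim (\<lambda>n. exp (ln (real n) + real (L n) * ln (G (r n) m) - ln (real (L n) + 1)))
      at_top sequentially"
    using x(3) by (intro exp_at_top_if_ratio_ln_pos) (simp_all add: diff_divide_distrib)
  then have "filterlim (\<lambda>n. 1 / 2 * exp (ln (real n) + real (L n) * ln (G (r n) m)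
      - ln (real (L n) + 1))) at_top sequentially"
    by (intro filterlim_tendsto_pos_mult_at_top[OF tendsto_const]) auto
  moreover have "\<forall>\<^sub>F n in sequentially. 1 / 2 * exp (ln (real n) + real (L n) * ln (G (r n) m)
      - ln (real (L n) + 1)) = real n * G (r n) m ^ L n / (real (L n) + 1) / 2"
    using r01 eventually_gt_at_top[of "0::nat"]
    by eventually_elim (use m in \<open>simp add: exp_diff exp_add exp_of_nat_mult G_pos\<close>)
  ultimately show ?thesis
    unfolding r_def by (rule filterlim_cong[OF refl refl, THEN iffD1, rotated])
qed

lemma obtain_exponent_above:
  assumes "1 + \<rho> * (\<nu> * ln g1 + (1 - \<nu>) * ln g0) < 0"
  obtains \<nu>' where "\<nu> < \<nu>'" "\<nu>' < m" "1 + \<rho> * (\<nu>' * ln g1 + (1 - \<nu>') * ln g0) < 0"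
    and "0 < 1 + \<rho> * ln (G \<nu>' m)"
proof -
  define h where "h x = 1 + \<rho> * (x * ln g1 + (1 - x) * ln g0)" for x
  have "isCont h \<nu>"
    unfolding h_def by (intro continuous_intros)
  moreover have "h \<nu> < 0"
    using assms by (simp add: h_def)
  ultimately obtain \<nu>' where \<nu>': "\<nu> < \<nu>'" "\<nu>' < m" "h \<nu>' < 0"
    using isCont_obtain_right \<nu>(2) by blast
  have "\<rho> * ln (G \<nu> m) < \<rho> * ln (G \<nu>' m)"
    using ln_G_strict_mono[of \<nu> \<nu>' m] \<nu> \<nu>' m \<rho> by simp
  then have "0 < 1 + \<rho> * ln (G \<nu>' m)"
    using \<nu>(3) by linarith
  with \<nu>' show ?thesis
    by (intro that) (simp_all add: h_def)
qed

lemma obtain_exponent_below: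
  assumes "0 < 1 + \<rho> * (\<nu> * ln g1 + (1 - \<nu>) * ln g0)"
  obtains \<nu>' where "0 < \<nu>'" "\<nu>' < \<nu>" "0 < 1 + \<rho> * (\<nu>' * ln g1 + (1 - \<nu>') * ln g0)"
    and "1 + \<rho> * ln (G \<nu>' m) < 0"
proof -
  define h where "h x = 1 + \<rho> * (x * ln g1 + (1 - x) * ln g0)" for x
  have "isCont h \<nu>"
    unfolding h_def by (intro continuous_intros)
  moreover have "0 < h \<nu>"
    using assms by (simp add: h_def)
  ultimately obtain \<nu>' where \<nu>': "0 < \<nu>'" "\<nu>' < \<nu>" "0 < h \<nu>'"
    using isCont_obtain_left \<nu>(1) by blast
  have "\<rho> * ln (G \<nu>' m) < \<rho> * ln (G \<nu> m)"
    using ln_G_strict_mono[of \<nu>' \<nu> m] \<nu> \<nu>' m \<rho> by simp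
  then have "1 + \<rho> * ln (G \<nu>' m) < 0"
    using \<nu>(3) by linarith
  with \<nu>' show ?thesis
    by (intro that) (simp_all add: h_def)
qed

(* A single term, k = ceiling (nu' * L) with nu' slightly above nu, already diverges. *)
lemma isolated_mean_at_top:
  assumes "1 + \<rho> * (\<nu> * ln g1 + (1 - \<nu>) * ln g0) < 0"
  shows "filterlim (\<lambda>n. isolated_mean m g0 g1 n (L n)) at_top sequentially"
proof -
  obtain \<nu>' where \<nu>': "\<nu> < \<nu>'" "\<nu>' < m" "1 + \<rho> * (\<nu>' * ln g1 + (1 - \<nu>') * ln g0) < 0"
    and G': "0 < 1 + \<rho> * ln (G \<nu>' m)"
    using obtain_exponent_above[OF assms] .
  define k where "k n = nat \<lceil>\<nu>' * L n\<rceil>" for n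
  have k: "(\<lambda>n. real (k n) / real (L n)) \<longlonglongrightarrow> \<nu>'"
    unfolding k_def using tendsto_ceiling_ratio[OF L_at_top, of \<nu>'] \<nu> \<nu>' by simp
  have "\<forall>\<^sub>F n in sequentially. 0 < real (k n) / real (L n) \<and> real (k n) / real (L n) < 1"
    using k \<nu> \<nu>' m by (auto intro!: eventually_conj order_tendstoD)
  then have kL: "\<forall>\<^sub>F n in sequentially. 0 < k n \<and> k n < L n"
    by eventually_elim (auto simp: zero_less_divide_iff divide_less_eq)
  have "(\<lambda>n. real n * (g1 ^ k n * g0 ^ (L n - k n))) \<longlonglongrightarrow> 0"
    by (rule n_times_edge_prob_tendsto_0[OF k \<nu>'(3)]) (use kL in \<open>auto elim: eventually_mono\<close>)
  then have "\<forall>\<^sub>F n in sequentially. real n * (g1 ^ k n * g0 ^ (L n - k n)) < 1 / 2"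
    by (rule order_tendstoD(2)) simp
  then have small: "\<forall>\<^sub>F n in sequentially. real n * (g1 ^ k n * g0 ^ (L n - k n)) \<le> 1 / 2"
    by eventually_elim simp
  show ?thesis
  proof (rule filterlim_at_top_mono[OF n_times_G_power_at_top[OF k _ _ G']])
    show "\<forall>\<^sub>F n in sequentially. real n * G (k n / L n) m ^ L n / (real (L n) + 1) / 2
        \<le> isolated_mean m g0 g1 n (L n)"
      using kL small
    proof eventually_elim
      case (elim n)
      show ?case
        by (rule isolated_mean_ge) (use elim m g in auto)
    qed
  qed (use \<nu> \<nu>' m in auto)
qed

(* Nodes with at most nu' * L ones, nu' slightly below nu, are rarer than 1 / n by Chernoff's
   bound; any other node is adjacent to each other node with probability at least n^(a - 1)
   for some a > 0. *)
lemma isolated_mean_tendsto_0: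
  assumes "0 < 1 + \<rho> * (\<nu> * ln g1 + (1 - \<nu>) * ln g0)"
  shows "(\<lambda>n. isolated_mean m g0 g1 n (L n)) \<longlonglongrightarrow> 0"
proof -
  obtain \<nu>' where \<nu>': "0 < \<nu>'" "\<nu>' < \<nu>" "0 < 1 + \<rho> * (\<nu>' * ln g1 + (1 - \<nu>') * ln g0)"
    and G': "1 + \<rho> * ln (G \<nu>' m) < 0"
    using obtain_exponent_below[OF assms] .
  have upper: "(\<lambda>n. real n * G \<nu>' m ^ L n
      + real n * exp (- real (n - 1) * exp (L n * (\<nu>' * ln g1 + (1 - \<nu>') * ln g0)))) \<longlonglongrightarrow> 0"
    using tendsto_add[OF n_times_power_tendsto_0[OF G_pos G'] n_times_exp_neg_tendsto_0]
      \<nu> \<nu>' m by simp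
  show ?thesis
  proof (rule tendsto_sandwich[OF _ _ tendsto_const upper])
    show "\<forall>\<^sub>F n in sequentially. 0 \<le> isolated_mean m g0 g1 n (L n)"
      using m g by (intro always_eventually allI isolated_mean_nonneg) auto
    show "\<forall>\<^sub>F n in sequentially. isolated_mean m g0 g1 n (L n) \<le> real n * G \<nu>' m ^ L n
        + real n * exp (- real (n - 1) * exp (L n * (\<nu>' * ln g1 + (1 - \<nu>') * ln g0)))"
      using \<nu> \<nu>' m g by (intro always_eventually allI isolated_mean_le) auto
  qed
qed

end

section \<open>The expected number of isolated nodes\<close>

lemma (in prob_space) indep_vars_integral_prod_bounded:
  fixes Z :: "'i \<Rightarrow> 'a \<Rightarrow> real"
  assumes indep: "indep_vars (\<lambda>_. borel) Z J" and J: "finite J"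
    and bounded: "\<And>j \<omega>. j \<in> J \<Longrightarrow> \<bar>Z j \<omega>\<bar> \<le> 1"
  shows "integrable M (\<lambda>\<omega>. \<Prod>j\<in>J. Z j \<omega>)"
    and "(\<integral>\<omega>. (\<Prod>j\<in>J. Z j \<omega>) \<partial>M) = (\<Prod>j\<in>J. \<integral>\<omega>. Z j \<omega> \<partial>M)"
proof -
  have "integrable M (Z j)" if "j \<in> J" for j
  proof (rule integrable_const_bound[where B=1])
    show "AE \<omega> in M. norm (Z j \<omega>) \<le> 1"
      using bounded[OF that] by simp
    show "Z j \<in> borel_measurable M"
      using indep that unfolding indep_vars_def by auto
  qed
  then show "integrable M (\<lambda>\<omega>. \<Prod>j\<in>J. Z j \<omega>)"
    and "(\<integral>\<omega>. (\<Prod>j\<in>J. Z j \<omega>) \<partial>M) = (\<Prod>j\<in>J. \<integral>\<omega>. Z j \<omega> \<partial>M)"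
    using indep_vars_integrable[OF J indep] indep_vars_lebesgue_integral[OF J indep] by auto
qed

lemma (in prob_space) indep_vars_integral_prod_functions:
  fixes Y :: "'i \<Rightarrow> 'a \<Rightarrow> real" and h :: "'i \<Rightarrow> real \<Rightarrow> real"
  assumes indep: "indep_vars (\<lambda>_. borel) Y I" and J: "finite J" "J \<subseteq> I"
    and h: "\<And>i. i \<in> J \<Longrightarrow> h i \<in> borel_measurable borel" "\<And>i x. i \<in> J \<Longrightarrow> \<bar>h i x\<bar> \<le> 1"
  shows "integrable M (\<lambda>\<omega>. \<Prod>i\<in>J. h i (Y i \<omega>))"
    and "(\<integral>\<omega>. (\<Prod>i\<in>J. h i (Y i \<omega>)) \<partial>M) = (\<Prod>i\<in>J. \<integral>\<omega>. h i (Y i \<omega>) \<partial>M)"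
proof -
  have "indep_vars (\<lambda>_. borel) (\<lambda>i \<omega>. h i (Y i \<omega>)) J"
    by (rule indep_vars_compose2[OF indep_vars_subset[OF indep J(2)]]) (use h in auto)
  then show "integrable M (\<lambda>\<omega>. \<Prod>i\<in>J. h i (Y i \<omega>))"
    and "(\<integral>\<omega>. (\<Prod>i\<in>J. h i (Y i \<omega>)) \<partial>M) = (\<Prod>i\<in>J. \<integral>\<omega>. h i (Y i \<omega>) \<partial>M)"
    using indep_vars_integral_prod_bounded[OF _ J(1)] h(2) by auto
qed

lemma (in prob_space) indep_vars_integral_prod_blocks:
  fixes Y :: "'i \<Rightarrow> 'a \<Rightarrow> real" and F :: "'j \<Rightarrow> ('i \<Rightarrow> real) \<Rightarrow> real"
  assumes indep: "indep_vars (\<lambda>_. borel) Y I" and W: "finite W"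
    and K: "\<And>j. j \<in> W \<Longrightarrow> K j \<subseteq> I" "disjoint_family_on K W"
    and F: "\<And>j. j \<in> W \<Longrightarrow> F j \<in> borel_measurable (PiM (K j) (\<lambda>_. borel))"
      "\<And>j x. j \<in> W \<Longrightarrow> \<bar>F j x\<bar> \<le> 1"
  shows "integrable M (\<lambda>\<omega>. \<Prod>j\<in>W. F j (restrict (\<lambda>i. Y i \<omega>) (K j)))"
    and "(\<integral>\<omega>. (\<Prod>j\<in>W. F j (restrict (\<lambda>i. Y i \<omega>) (K j))) \<partial>M)
      = (\<Prod>j\<in>W. \<integral>\<omega>. F j (restrict (\<lambda>i. Y i \<omega>) (K j)) \<partial>M)"
proof -
  have "indep_vars (\<lambda>_. borel) (\<lambda>j \<omega>. F j (restrict (\<lambda>i. Y i \<omega>) (K j))) W"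
    by (rule indep_vars_compose2[OF indep_vars_restrict[OF indep K]]) (use F in auto)
  then show "integrable M (\<lambda>\<omega>. \<Prod>j\<in>W. F j (restrict (\<lambda>i. Y i \<omega>) (K j)))"
    and "(\<integral>\<omega>. (\<Prod>j\<in>W. F j (restrict (\<lambda>i. Y i \<omega>) (K j))) \<partial>M)
      = (\<Prod>j\<in>W. \<integral>\<omega>. F j (restrict (\<lambda>i. Y i \<omega>) (K j)) \<partial>M)"
    using indep_vars_integral_prod_bounded[OF _ W] F(2) by auto
qed

definition binary_vectors :: "nat \<Rightarrow> (nat \<Rightarrow> nat) set" where
  "binary_vectors L = PiE {1..L} (\<lambda>_. {0, 1})"

definition ones :: "nat \<Rightarrow> (nat \<Rightarrow> nat) \<Rightarrow> nat" where
  "ones L a = card {l\<in>{1..L}. a l = 1}"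

lemma finite_binary_vectors: "finite (binary_vectors L)"
  unfolding binary_vectors_def by (intro finite_PiE) auto

lemma binary_vectors_range: "a \<in> binary_vectors L \<Longrightarrow> l \<in> {1..L} \<Longrightarrow> a l \<in> {0, 1}"
  unfolding binary_vectors_def by (rule PiE_mem)

lemma prod_of_bool: "finite S \<Longrightarrow> (\<Prod>x\<in>S. of_bool (P x) :: 'a :: comm_semiring_1) = of_bool (\<forall>x\<in>S. P x)"
  by (induction S rule: finite_induct) auto

lemma sum_binary_vectors_indicator:
  fixes f :: "(nat \<Rightarrow> nat) \<Rightarrow> 'a :: comm_semiring_1"
  assumes x: "\<forall>l\<in>{1..L}. x l \<in> {0, 1}"
  shows "(\<Sum>a\<in>binary_vectors L. (\<Prod>l\<in>{1..L}. of_bool (x l = a l)) * f a) = f (restrict x {1..L})"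
proof -
  define a0 where "a0 = restrict x {1..L}"
  have a0: "a0 \<in> binary_vectors L"
    using x by (auto simp: binary_vectors_def a0_def)
  have "(\<forall>l\<in>{1..L}. x l = a l) \<longleftrightarrow> a0 = a" if "a \<in> binary_vectors L" for a
    using that unfolding a0_def binary_vectors_def by (auto simp: PiE_def extensional_def)
  then have "(\<Sum>a\<in>binary_vectors L. (\<Prod>l\<in>{1..L}. of_bool (x l = a l)) * f a)
      = (\<Sum>a\<in>binary_vectors L. if a0 = a then f a else 0)"
    by (intro sum.cong) (auto simp: prod_of_bool)
  also have "\<dots> = f a0"
    using a0 finite_binary_vectors by simp
  finally show ?thesis
    by (simp add: a0_def)
qed

lemma sum_binary_vectors_prod:
  fixes f :: "nat \<Rightarrow> nat \<Rightarrow> 'a :: comm_semiring_1"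
  shows "(\<Sum>b\<in>binary_vectors L. \<Prod>l\<in>{1..L}. f l (b l)) = (\<Prod>l\<in>{1..L}. f l 0 + f l 1)"
  unfolding binary_vectors_def by (subst prod_sum_PiE[symmetric]) auto

lemma prod_binary_vector:
  fixes f :: "nat \<Rightarrow> 'a :: comm_monoid_mult"
  assumes a: "a \<in> binary_vectors L"
  shows "(\<Prod>l\<in>{1..L}. f (a l)) = f 1 ^ ones L a * f 0 ^ (L - ones L a)"
proof -
  define S where "S = {l\<in>{1..L}. a l = 1}"
  have S: "S \<subseteq> {1..L}" "finite S"
    by (auto simp: S_def)
  have "(\<Prod>l\<in>{1..L}. f (a l)) = (\<Prod>l\<in>{1..L} - S. f (a l)) * (\<Prod>l\<in>S. f (a l))"
    by (rule prod.subset_diff[OF S(1)]) simp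
  also have "(\<Prod>l\<in>S. f (a l)) = (\<Prod>l\<in>S. f 1)"
    by (intro prod.cong) (auto simp: S_def)
  also have "(\<Prod>l\<in>{1..L} - S. f (a l)) = (\<Prod>l\<in>{1..L} - S. f 0)"
  proof (intro prod.cong refl)
    fix l assume "l \<in> {1..L} - S"
    then show "f (a l) = f 0"
      using binary_vectors_range[OF a, of l] by (auto simp: S_def)
  qed
  moreover have "ones L a = card S"
    by (simp add: ones_def S_def)
  ultimately show ?thesis
    using S by (simp add: card_Diff_subset mult.commute)
qed

lemma sum_binary_vectors_ones:
  fixes \<phi> :: "nat \<Rightarrow> 'a :: comm_semiring_1"
  shows "(\<Sum>a\<in>binary_vectors L. \<phi> (ones L a)) = (\<Sum>k\<le>L. of_nat (L choose k) * \<phi> k)"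
proof -
  define g where "g a = {l\<in>{1..L}. a l = 1}" for a :: "nat \<Rightarrow> nat"
  define g' where "g' S = restrict (\<lambda>l. if l \<in> S then 1 else 0 :: nat) {1..L}" for S
  have bij: "bij_betw g (binary_vectors L) (Pow {1..L})"
  proof (rule bij_betw_byWitness[where f'=g'])
    show "\<forall>a\<in>binary_vectors L. g' (g a) = a"
      by (auto simp: g_def g'_def binary_vectors_def PiE_def extensional_def fun_eq_iff)
    show "\<forall>S\<in>Pow {1..L}. g (g' S) = S"
    proof
      fix S assume "S \<in> Pow {1..L}"
      then have "l \<in> g (g' S) \<longleftrightarrow> l \<in> S" for l
        by (cases "l \<in> S") (auto simp: g_def g'_def)
      then show "g (g' S) = S"
        by blast
    qed
    show "g ` binary_vectors L \<subseteq> Pow {1..L}"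
      by (auto simp: g_def)
    show "g' ` Pow {1..L} \<subseteq> binary_vectors L"
      unfolding g'_def binary_vectors_def by (auto simp only: restrict_PiE_iff) (auto split: if_split_asm)
  qed
  have "(\<Sum>a\<in>binary_vectors L. \<phi> (ones L a)) = (\<Sum>S\<in>Pow {1..L}. \<phi> (card S))"
    unfolding ones_def g_def[symmetric] by (rule sum.reindex_bij_betw[OF bij])
  also have "\<dots> = (\<Sum>k\<le>L. \<Sum>S\<in>{S\<in>Pow {1..L}. card S = k}. \<phi> (card S))"
    by (rule sum.group[symmetric]) (auto dest: card_mono[rotated])
  also have "\<dots> = (\<Sum>k\<le>L. of_nat (L choose k) * \<phi> k)"
  proof (intro sum.cong refl)
    fix k
    have "(\<Sum>S\<in>{S\<in>Pow {1..L}. card S = k}. \<phi> (card S)) = of_nat (card {S. S \<subseteq> {1..L} \<and> card S = k}) * \<phi> k"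
      by simp
    then show "(\<Sum>S\<in>{S\<in>Pow {1..L}. card S = k}. \<phi> (card S)) = of_nat (L choose k) * \<phi> k"
      using n_subsets[of "{1..L}" k] by simp
  qed
  finally show ?thesis .
qed

type_synonym mag_var = "(nat \<times> nat) + (nat \<times> nat)"

lemma borel_measurable_of_bool_eq: "(\<lambda>x::real. of_bool (x = c) :: real) \<in> borel_measurable borel"
  unfolding of_bool_def by measurable

lemma borel_measurable_of_bool_less: "(\<lambda>x::real. of_bool (c < x) :: real) \<in> borel_measurable borel"
  unfolding of_bool_def by measurable

(* Given the attribute vector a of u, the indicator that u is isolated is a product over the
   nodes w of factors depending on disjoint blocks of the family: the attributes of u for w = u,
   and the attributes of w together with U(u, w) otherwise. star_factor_on is such a factor as a
   function of its block, whose entries are reals. *)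
definition star_block :: "nat \<Rightarrow> nat \<Rightarrow> nat \<Rightarrow> mag_var set" where
  "star_block L u w = (if w = u then (\<lambda>l. Inl (l, u)) ` {1..L}
     else insert (Inr (min u w, max u w)) ((\<lambda>l. Inl (l, w)) ` {1..L}))"

definition star_factor_on :: "(nat \<Rightarrow> nat \<Rightarrow> real) \<Rightarrow> nat \<Rightarrow> nat \<Rightarrow> (nat \<Rightarrow> nat) \<Rightarrow> nat
    \<Rightarrow> (mag_var \<Rightarrow> real) \<Rightarrow> real" where
  "star_factor_on q L u a w x = (if w = u then (\<Prod>l\<in>{1..L}. of_bool (x (Inl (l, u)) = real (a l)))
     else of_bool ((\<Prod>l\<in>{1..L}. q (a l) (if x (Inl (l, w)) = 1 then 1 else 0))
       < x (Inr (min u w, max u w))))"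

lemma star_block_subset: "1 \<le> u \<Longrightarrow> 1 \<le> w \<Longrightarrow> star_block L u w \<subseteq> mag_index"
  by (auto simp: star_block_def mag_index_def min_def max_def)

lemma disjoint_star_blocks: "disjoint_family_on (star_block L u) W"
  unfolding disjoint_family_on_def star_block_def by (auto simp: min_def max_def split: if_splits)

lemma star_factor_on_bounded: "\<bar>star_factor_on q L u a w x\<bar> \<le> 1"
  by (simp add: star_factor_on_def prod_of_bool)

lemma measurable_star_factor_on:
  "star_factor_on q L u a w \<in> borel_measurable (PiM (star_block L u w) (\<lambda>_. borel))"
proof -
  have comp: "(\<lambda>x. x i) \<in> borel_measurable (PiM (star_block L u w) (\<lambda>_. borel))"
    if "i \<in> star_block L u w" for i
    using that by measurable
  show ?thesis
    unfolding star_factor_on_def of_bool_def using comp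
    by (cases "w = u") (auto simp: star_block_def intro!: borel_measurable_prod measurable_If)
qed

locale mag_model = prob_space M for M :: "'w measure" +
  fixes mu :: "nat \<Rightarrow> real" and q :: "nat \<Rightarrow> nat \<Rightarrow> real"
    and A :: "nat \<Rightarrow> nat \<Rightarrow> 'w \<Rightarrow> nat" and U :: "nat \<Rightarrow> nat \<Rightarrow> 'w \<Rightarrow> real"
  assumes mu_sum: "mu 0 + mu 1 = 1"
    and q_range: "\<And>a b. a \<in> {0, 1} \<Longrightarrow> b \<in> {0, 1} \<Longrightarrow> 0 \<le> q a b \<and> q a b \<le> 1"
    and indep: "indep_vars (\<lambda>_. borel) (mag_family A U) mag_index"
    and A_range: "\<And>l u \<omega>. 1 \<le> l \<Longrightarrow> 1 \<le> u \<Longrightarrow> \<omega> \<in> space M \<Longrightarrow> A l u \<omega> \<in> {0, 1}"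
    and A_distr: "\<And>l u. 1 \<le> l \<Longrightarrow> 1 \<le> u \<Longrightarrow> prob {\<omega>\<in>space M. A l u \<omega> = 1} = mu 1"
    and U_distr: "\<And>u v. 1 \<le> u \<Longrightarrow> u < v \<Longrightarrow> distr M borel (U u v) = uniform_measure lborel {0..1}"
begin

lemma measurable_mag_family: "i \<in> mag_index \<Longrightarrow> mag_family A U i \<in> borel_measurable M"
  using indep unfolding indep_vars_def by auto

lemma measurable_A: "1 \<le> l \<Longrightarrow> 1 \<le> u \<Longrightarrow> (\<lambda>\<omega>. real (A l u \<omega>)) \<in> borel_measurable M"
  using measurable_mag_family[of "Inl (l, u)"] by (simp add: mag_family_def mag_index_def)

lemma measurable_U: "1 \<le> u \<Longrightarrow> u < v \<Longrightarrow> U u v \<in> borel_measurable M"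
  using measurable_mag_family[of "Inr (u, v)"] by (simp add: mag_family_def mag_index_def)

lemma integral_A_indicator:
  assumes "1 \<le> l" "1 \<le> u" "t \<in> {0, 1}"
  shows "(\<integral>\<omega>. of_bool (A l u \<omega> = t) \<partial>M) = mu t"
proof -
  have events: "{\<omega>\<in>space M. A l u \<omega> = s} \<in> events" for s
  proof -
    have "{\<omega>\<in>space M. A l u \<omega> = s} = (\<lambda>\<omega>. real (A l u \<omega>)) -` {real s} \<inter> space M"
      by auto
    then show ?thesis
      using measurable_sets[OF measurable_A[OF assms(1,2)]] by simp
  qed
  have "(\<integral>\<omega>. of_bool (A l u \<omega> = t) \<partial>M) = (\<integral>\<omega>. indicator {\<omega>\<in>space M. A l u \<omega> = t} \<omega> \<partial>M)"
    by (intro Bochner_Integration.integral_cong) (auto simp: indicator_def)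
  also have "\<dots> = prob {\<omega>\<in>space M. A l u \<omega> = t}"
    using events[of t] by simp
  also have "\<dots> = mu t"
  proof (cases "t = 1")
    case False
    then have "{\<omega>\<in>space M. A l u \<omega> = t} = space M - {\<omega>\<in>space M. A l u \<omega> = 1}"
      using A_range assms by fastforce
    then show ?thesis
      using prob_compl[OF events[of 1]] A_distr assms mu_sum False by auto
  qed (use A_distr assms in auto)
  finally show ?thesis .
qed

lemma integral_U_indicator:
  assumes "1 \<le> s" "s < t" "0 \<le> c" "c \<le> 1"
  shows "(\<integral>\<omega>. of_bool (c < U s t \<omega>) \<partial>M) = 1 - c"
proof -
  have "(\<integral>\<omega>. of_bool (c < U s t \<omega>) \<partial>M) = (\<integral>\<omega>. indicator (U s t -` {c<..} \<inter> space M) \<omega> \<partial>M)"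
    by (intro Bochner_Integration.integral_cong) (auto simp: indicator_def)
  also have "\<dots> = measure (distr M borel (U s t)) {c<..}"
    using measurable_U[OF assms(1,2)] by (simp add: measure_distr measurable_sets)
  also have "\<dots> = measure (uniform_measure lborel {0..1::real}) {c<..}"
    using U_distr[OF assms(1,2)] by simp
  also have "\<dots> = measure lborel ({0..1} \<inter> {c<..}) / measure lborel {0..1::real}"
    by (rule measure_uniform_measure) auto
  also have "{0..1} \<inter> {c<..} = {c<..1}"
    using assms by auto
  finally show ?thesis
    using assms by simp
qed

lemma integral_attributes:
  assumes w: "1 \<le> w" and b: "b \<in> binary_vectors L"
  shows "(\<integral>\<omega>. (\<Prod>l\<in>{1..L}. of_bool (A l w \<omega> = b l)) \<partial>M) = (\<Prod>l\<in>{1..L}. mu (b l))"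
proof -
  define J :: "mag_var set" where "J = (\<lambda>l. Inl (l, w)) ` {1..L}"
  define h :: "mag_var \<Rightarrow> real \<Rightarrow> real"
    where "h i = (\<lambda>x. of_bool (x = real (b (fst (projl i)))))" for i
  have inj: "inj_on (\<lambda>l. Inl (l, w) :: mag_var) {1..L}"
    by (auto simp: inj_on_def)
  have eq: "(\<Prod>l\<in>{1..L}. of_bool (A l w \<omega> = b l)) = (\<Prod>i\<in>J. h i (mag_family A U i \<omega>))" for \<omega>
    unfolding J_def prod.reindex[OF inj] by (simp add: h_def mag_family_def)
  have J: "finite J" "J \<subseteq> mag_index"
    using w by (auto simp: J_def mag_index_def)
  have h: "h i \<in> borel_measurable borel" "\<bar>h i x\<bar> \<le> 1" for i x
    by (simp_all add: h_def borel_measurable_of_bool_eq)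
  have "(\<integral>\<omega>. (\<Prod>l\<in>{1..L}. of_bool (A l w \<omega> = b l)) \<partial>M) = (\<Prod>i\<in>J. \<integral>\<omega>. h i (mag_family A U i \<omega>) \<partial>M)"
    unfolding eq by (rule indep_vars_integral_prod_functions(2)[OF indep J h])
  also have "\<dots> = (\<Prod>l\<in>{1..L}. \<integral>\<omega>. of_bool (A l w \<omega> = b l) \<partial>M)"
    unfolding J_def prod.reindex[OF inj] by (simp add: h_def mag_family_def)
  also have "\<dots> = (\<Prod>l\<in>{1..L}. mu (b l))"
    by (intro prod.cong refl integral_A_indicator) (use w binary_vectors_range[OF b] in auto)
  finally show ?thesis .
qed

lemma integral_attributes_U:
  assumes w: "1 \<le> w" and st: "1 \<le> s" "s < t" and b: "b \<in> binary_vectors L"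
    and c: "0 \<le> c" "c \<le> 1"
  shows "integrable M (\<lambda>\<omega>. (\<Prod>l\<in>{1..L}. of_bool (A l w \<omega> = b l)) * of_bool (c < U s t \<omega>) :: real)"
    and "(\<integral>\<omega>. (\<Prod>l\<in>{1..L}. of_bool (A l w \<omega> = b l)) * of_bool (c < U s t \<omega>) \<partial>M)
      = (\<Prod>l\<in>{1..L}. mu (b l)) * (1 - c)"
proof -
  define J0 :: "mag_var set" where "J0 = (\<lambda>l. Inl (l, w)) ` {1..L}"
  define h :: "mag_var \<Rightarrow> real \<Rightarrow> real"
    where "h i = (case i of Inl p \<Rightarrow> (\<lambda>x. of_bool (x = real (b (fst p))))
      | Inr _ \<Rightarrow> (\<lambda>x. of_bool (c < x)))" for i
  have inj: "inj_on (\<lambda>l. Inl (l, w) :: mag_var) {1..L}"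
    by (auto simp: inj_on_def)
  have J0: "finite J0" "Inr (s, t) \<notin> J0"
    by (auto simp: J0_def)
  have eq: "(\<Prod>l\<in>{1..L}. of_bool (A l w \<omega> = b l)) * of_bool (c < U s t \<omega>)
      = (\<Prod>i\<in>insert (Inr (s, t)) J0. h i (mag_family A U i \<omega>))" for \<omega>
    unfolding prod.insert[OF J0] unfolding J0_def prod.reindex[OF inj] by (simp add: h_def mag_family_def mult.commute)
  have J: "finite (insert (Inr (s, t)) J0)" "insert (Inr (s, t)) J0 \<subseteq> mag_index"
    using w st by (auto simp: J0_def mag_index_def)
  have h: "h i \<in> borel_measurable borel" "\<bar>h i x\<bar> \<le> 1" for i x
    by (simp_all add: h_def borel_measurable_of_bool_eq borel_measurable_of_bool_less
        split: sum.split)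
  note prod = indep_vars_integral_prod_functions[OF indep J h]
  show "integrable M (\<lambda>\<omega>. (\<Prod>l\<in>{1..L}. of_bool (A l w \<omega> = b l)) * of_bool (c < U s t \<omega>) :: real)"
    unfolding eq by (rule prod(1))
  have "(\<integral>\<omega>. (\<Prod>l\<in>{1..L}. of_bool (A l w \<omega> = b l)) * of_bool (c < U s t \<omega>) \<partial>M)
      = (\<Prod>i\<in>insert (Inr (s, t)) J0. \<integral>\<omega>. h i (mag_family A U i \<omega>) \<partial>M)"
    unfolding eq by (rule prod(2))
  also have "\<dots> = (\<integral>\<omega>. of_bool (c < U s t \<omega>) \<partial>M) * (\<Prod>l\<in>{1..L}. \<integral>\<omega>. of_bool (A l w \<omega> = b l) \<partial>M)"
    unfolding prod.insert[OF J0] unfolding J0_def prod.reindex[OF inj] by (simp add: h_def mag_family_def)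
  also have "\<dots> = (1 - c) * (\<Prod>l\<in>{1..L}. mu (b l))"
    using integral_U_indicator[OF st c] integral_A_indicator w binary_vectors_range[OF b] by simp
  finally show "(\<integral>\<omega>. (\<Prod>l\<in>{1..L}. of_bool (A l w \<omega> = b l)) * of_bool (c < U s t \<omega>) \<partial>M)
      = (\<Prod>l\<in>{1..L}. mu (b l)) * (1 - c)"
    by (simp add: mult.commute)
qed

lemma integral_no_edge:
  assumes w: "1 \<le> w" and st: "1 \<le> s" "s < t" and a: "a \<in> binary_vectors L"
  shows "(\<integral>\<omega>. of_bool ((\<Prod>l\<in>{1..L}. q (a l) (A l w \<omega>)) < U s t \<omega>) \<partial>M)
    = 1 - (\<Prod>l\<in>{1..L}. Gam mu q (a l))"
proof -
  define c where "c b = (\<Prod>l\<in>{1..L}. q (a l) (b l))" for b :: "nat \<Rightarrow> nat"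
  have c: "0 \<le> c b \<and> c b \<le> 1" if "b \<in> binary_vectors L" for b
    unfolding c_def using q_range binary_vectors_range[OF a] binary_vectors_range[OF that]
    by (auto intro!: prod_nonneg prod_le_1)
  have expand: "(of_bool ((\<Prod>l\<in>{1..L}. q (a l) (A l w \<omega>)) < U s t \<omega>) :: real)
      = (\<Sum>b\<in>binary_vectors L. (\<Prod>l\<in>{1..L}. of_bool (A l w \<omega> = b l)) * of_bool (c b < U s t \<omega>))"
    if "\<omega> \<in> space M" for \<omega>
  proof -
    have "\<forall>l\<in>{1..L}. A l w \<omega> \<in> {0, 1}"
      using A_range w that by auto
    then have "(\<Sum>b\<in>binary_vectors L. (\<Prod>l\<in>{1..L}. of_bool (A l w \<omega> = b l)) * of_bool (c b < U s t \<omega>))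
        = (of_bool (c (restrict (\<lambda>l. A l w \<omega>) {1..L}) < U s t \<omega>) :: real)"
      by (rule sum_binary_vectors_indicator)
    moreover have "c (restrict (\<lambda>l. A l w \<omega>) {1..L}) = (\<Prod>l\<in>{1..L}. q (a l) (A l w \<omega>))"
      unfolding c_def by (intro prod.cong) auto
    ultimately show ?thesis
      by (simp only:)
  qed
  have "(\<integral>\<omega>. of_bool ((\<Prod>l\<in>{1..L}. q (a l) (A l w \<omega>)) < U s t \<omega>) \<partial>M)
      = (\<integral>\<omega>. (\<Sum>b\<in>binary_vectors L. (\<Prod>l\<in>{1..L}. of_bool (A l w \<omega> = b l)) * of_bool (c b < U s t \<omega>)) \<partial>M :: real)"
    by (rule Bochner_Integration.integral_cong[OF refl expand])
  also have "\<dots> = (\<Sum>b\<in>binary_vectors L.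
      \<integral>\<omega>. (\<Prod>l\<in>{1..L}. of_bool (A l w \<omega> = b l)) * of_bool (c b < U s t \<omega>) \<partial>M)"
    by (rule Bochner_Integration.integral_sum) (use integral_attributes_U(1)[OF w st] c in auto)
  also have "\<dots> = (\<Sum>b\<in>binary_vectors L. (\<Prod>l\<in>{1..L}. mu (b l)) * (1 - c b))"
    by (intro sum.cong refl integral_attributes_U(2)[OF w st]) (use c in auto)
  also have "\<dots> = (\<Sum>b\<in>binary_vectors L. \<Prod>l\<in>{1..L}. mu (b l))
      - (\<Sum>b\<in>binary_vectors L. \<Prod>l\<in>{1..L}. mu (b l) * q (a l) (b l))"
    by (simp add: c_def right_diff_distrib prod.distrib sum_subtractf)
  also have "\<dots> = 1 - (\<Prod>l\<in>{1..L}. Gam mu q (a l))"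
    using sum_binary_vectors_prod[where f="\<lambda>l y. mu y" and L=L]
      sum_binary_vectors_prod[where f="\<lambda>l y. mu y * q (a l) y" and L=L] mu_sum
    by (simp add: Gam_def)
  finally show ?thesis .
qed

definition star_factor :: "nat \<Rightarrow> nat \<Rightarrow> (nat \<Rightarrow> nat) \<Rightarrow> nat \<Rightarrow> 'w \<Rightarrow> real" where
  "star_factor L u a w \<omega> = (if w = u then (\<Prod>l\<in>{1..L}. of_bool (A l u \<omega> = a l))
     else of_bool ((\<Prod>l\<in>{1..L}. q (a l) (A l w \<omega>)) < U (min u w) (max u w) \<omega>))"

lemma star_factor_on_restrict:
  assumes \<omega>: "\<omega> \<in> space M" and uw: "1 \<le> u" "1 \<le> w"
  shows "star_factor_on q L u a w (restrict (\<lambda>i. mag_family A U i \<omega>) (star_block L u w))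
    = star_factor L u a w \<omega>"
proof (cases "w = u")
  case False
  have "(\<Prod>l\<in>{1..L}. q (a l) (if mag_family A U (Inl (l, w)) \<omega> = 1 then 1 else 0))
      = (\<Prod>l\<in>{1..L}. q (a l) (A l w \<omega>))"
  proof (intro prod.cong refl)
    fix l assume "l \<in> {1..L}"
    then have "A l w \<omega> \<in> {0, 1}"
      using A_range uw \<omega> by simp
    then show "q (a l) (if mag_family A U (Inl (l, w)) \<omega> = 1 then 1 else 0) = q (a l) (A l w \<omega>)"
      by (auto simp: mag_family_def)
  qed
  then show ?thesis
    using False by (simp add: star_factor_on_def star_factor_def star_block_def mag_family_def)
qed (simp add: star_factor_on_def star_factor_def star_block_def mag_family_def)

lemma isolated_eq_sum_star_factors:
  assumes u: "1 \<le> u" "u \<le> n" and \<omega>: "\<omega> \<in> space M"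
  shows "of_bool (\<forall>v\<in>{1..n}. \<not> edge q A U L u v \<omega>)
    = (\<Sum>a\<in>binary_vectors L. \<Prod>w\<in>{1..n}. star_factor L u a w \<omega>)"
proof -
  define f where "f a = (\<Prod>w\<in>{1..n} - {u}.
    of_bool ((\<Prod>l\<in>{1..L}. q (a l) (A l w \<omega>)) < U (min u w) (max u w) \<omega>) :: real)" for a
  have factor: "(\<Prod>w\<in>{1..n}. star_factor L u a w \<omega>) = (\<Prod>l\<in>{1..L}. of_bool (A l u \<omega> = a l)) * f a" for a
  proof -
    have "(\<Prod>w\<in>{1..n}. star_factor L u a w \<omega>)
        = star_factor L u a u \<omega> * (\<Prod>w\<in>{1..n} - {u}. star_factor L u a w \<omega>)"
      using u by (intro prod.remove) auto
    also have "(\<Prod>w\<in>{1..n} - {u}. star_factor L u a w \<omega>) = f a"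
      unfolding f_def by (intro prod.cong refl) (auto simp: star_factor_def)
    finally show ?thesis
      by (simp add: star_factor_def)
  qed
  have "\<forall>l\<in>{1..L}. A l u \<omega> \<in> {0, 1}"
    using A_range u \<omega> by auto
  then have "(\<Sum>a\<in>binary_vectors L. \<Prod>w\<in>{1..n}. star_factor L u a w \<omega>)
      = f (restrict (\<lambda>l. A l u \<omega>) {1..L})"
    unfolding factor by (rule sum_binary_vectors_indicator)
  also have "\<dots> = of_bool (\<forall>w\<in>{1..n} - {u}. QL q A L u w \<omega> < U (min u w) (max u w) \<omega>)"
    by (simp add: f_def QL_def prod_of_bool)
  also have "\<dots> = of_bool (\<forall>v\<in>{1..n}. \<not> edge q A U L u v \<omega>)"
    by (auto simp: edge_def not_le)
  finally show ?thesis ..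
qed

lemma integral_star_factors:
  assumes u: "1 \<le> u"
  shows "integrable M (\<lambda>\<omega>. \<Prod>w\<in>{1..n}. star_factor L u a w \<omega>)"
    and "(\<integral>\<omega>. (\<Prod>w\<in>{1..n}. star_factor L u a w \<omega>) \<partial>M)
      = (\<Prod>w\<in>{1..n}. \<integral>\<omega>. star_factor L u a w \<omega> \<partial>M)"
proof -
  have "star_block L u w \<subseteq> mag_index" if "w \<in> {1..n}" for w
    using that u by (simp add: star_block_subset)
  note blocks = indep_vars_integral_prod_blocks[OF indep, where W="{1..n}" and K="star_block L u"
      and F="star_factor_on q L u a", OF finite_atLeastAtMost this disjoint_star_blocks
      measurable_star_factor_on star_factor_on_bounded]
  have eq: "(\<Prod>w\<in>{1..n}. star_factor_on q L u a w (restrict (\<lambda>i. mag_family A U i \<omega>) (star_block L u w)))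
      = (\<Prod>w\<in>{1..n}. star_factor L u a w \<omega>)" if "\<omega> \<in> space M" for \<omega>
    using that u by (intro prod.cong refl star_factor_on_restrict) auto
  show "integrable M (\<lambda>\<omega>. \<Prod>w\<in>{1..n}. star_factor L u a w \<omega>)"
    by (rule Bochner_Integration.integrable_cong[OF refl, THEN iffD1, OF _ blocks(1)]) (rule eq)
  have "(\<integral>\<omega>. (\<Prod>w\<in>{1..n}. star_factor L u a w \<omega>) \<partial>M) = (\<integral>\<omega>. (\<Prod>w\<in>{1..n}.
      star_factor_on q L u a w (restrict (\<lambda>i. mag_family A U i \<omega>) (star_block L u w))) \<partial>M)"
    by (rule Bochner_Integration.integral_cong[OF refl eq[symmetric]])
  also have "\<dots> = (\<Prod>w\<in>{1..n}. \<integral>\<omega>. star_factor_on q L u a w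
      (restrict (\<lambda>i. mag_family A U i \<omega>) (star_block L u w)) \<partial>M)"
    by (rule blocks(2))
  also have "\<dots> = (\<Prod>w\<in>{1..n}. \<integral>\<omega>. star_factor L u a w \<omega> \<partial>M)"
    using u by (intro prod.cong refl Bochner_Integration.integral_cong star_factor_on_restrict) auto
  finally show "(\<integral>\<omega>. (\<Prod>w\<in>{1..n}. star_factor L u a w \<omega>) \<partial>M)
      = (\<Prod>w\<in>{1..n}. \<integral>\<omega>. star_factor L u a w \<omega> \<partial>M)" .
qed

lemma integral_star_factor:
  assumes "1 \<le> u" "1 \<le> w" "a \<in> binary_vectors L"
  shows "(\<integral>\<omega>. star_factor L u a w \<omega> \<partial>M)
    = (if w = u then (\<Prod>l\<in>{1..L}. mu (a l)) else 1 - (\<Prod>l\<in>{1..L}. Gam mu q (a l)))"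
  using assms integral_attributes[of u a L] integral_no_edge[of w "min u w" "max u w" a L]
  by (auto simp: star_factor_def)

lemma integral_isolated:
  assumes u: "1 \<le> u" "u \<le> n"
  shows "integrable M (\<lambda>\<omega>. of_bool (\<forall>v\<in>{1..n}. \<not> edge q A U L u v \<omega>) :: real)"
    and "(\<integral>\<omega>. of_bool (\<forall>v\<in>{1..n}. \<not> edge q A U L u v \<omega>) \<partial>M)
      = (\<Sum>a\<in>binary_vectors L. (\<Prod>l\<in>{1..L}. mu (a l)) * (1 - (\<Prod>l\<in>{1..L}. Gam mu q (a l))) ^ (n - 1))"
proof -
  have eq: "\<omega> \<in> space M \<Longrightarrow> (\<Sum>a\<in>binary_vectors L. \<Prod>w\<in>{1..n}. star_factor L u a w \<omega>)
      = of_bool (\<forall>v\<in>{1..n}. \<not> edge q A U L u v \<omega>)" for \<omega>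
    using isolated_eq_sum_star_factors[OF u] by simp
  have int: "integrable M (\<lambda>\<omega>. \<Sum>a\<in>binary_vectors L. \<Prod>w\<in>{1..n}. star_factor L u a w \<omega>)"
    using integral_star_factors(1)[OF u(1)] by simp
  show "integrable M (\<lambda>\<omega>. of_bool (\<forall>v\<in>{1..n}. \<not> edge q A U L u v \<omega>) :: real)"
    by (rule Bochner_Integration.integrable_cong[OF refl, THEN iffD1, OF _ int]) (rule eq)
  have "(\<integral>\<omega>. of_bool (\<forall>v\<in>{1..n}. \<not> edge q A U L u v \<omega>) \<partial>M)
      = (\<integral>\<omega>. (\<Sum>a\<in>binary_vectors L. \<Prod>w\<in>{1..n}. star_factor L u a w \<omega>) \<partial>M)"
    by (rule Bochner_Integration.integral_cong[OF refl eq[symmetric]])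
  also have "\<dots> = (\<Sum>a\<in>binary_vectors L. \<integral>\<omega>. (\<Prod>w\<in>{1..n}. star_factor L u a w \<omega>) \<partial>M)"
    by (rule Bochner_Integration.integral_sum) (rule integral_star_factors(1)[OF u(1)])
  also have "\<dots> = (\<Sum>a\<in>binary_vectors L. (\<Prod>l\<in>{1..L}. mu (a l)) * (1 - (\<Prod>l\<in>{1..L}. Gam mu q (a l))) ^ (n - 1))"
  proof (intro sum.cong refl)
    fix a assume a: "a \<in> binary_vectors L"
    have "(\<Prod>w\<in>{1..n}. \<integral>\<omega>. star_factor L u a w \<omega> \<partial>M)
        = (\<integral>\<omega>. star_factor L u a u \<omega> \<partial>M) * (\<Prod>w\<in>{1..n} - {u}. \<integral>\<omega>. star_factor L u a w \<omega> \<partial>M)"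
      using u by (intro prod.remove) auto
    also have "\<dots> = (\<Prod>l\<in>{1..L}. mu (a l)) * (1 - (\<Prod>l\<in>{1..L}. Gam mu q (a l))) ^ (n - 1)"
      using u a by (simp add: integral_star_factor)
    finally show "(\<integral>\<omega>. (\<Prod>w\<in>{1..n}. star_factor L u a w \<omega>) \<partial>M)
        = (\<Prod>l\<in>{1..L}. mu (a l)) * (1 - (\<Prod>l\<in>{1..L}. Gam mu q (a l))) ^ (n - 1)"
      using integral_star_factors(2)[OF u(1)] by simp
  qed
  finally show "(\<integral>\<omega>. of_bool (\<forall>v\<in>{1..n}. \<not> edge q A U L u v \<omega>) \<partial>M)
      = (\<Sum>a\<in>binary_vectors L. (\<Prod>l\<in>{1..L}. mu (a l)) * (1 - (\<Prod>l\<in>{1..L}. Gam mu q (a l))) ^ (n - 1))" .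
qed

theorem integral_isolated_count:
  "(\<integral>\<omega>. real (isolated_count q A U n L \<omega>) \<partial>M) = isolated_mean (mu 1) (Gam mu q 0) (Gam mu q 1) n L"
proof -
  have mu0: "mu 0 = 1 - mu 1"
    using mu_sum by simp
  have count: "real (isolated_count q A U n L \<omega>) = (\<Sum>u\<in>{1..n}. of_bool (\<forall>v\<in>{1..n}. \<not> edge q A U L u v \<omega>))" for \<omega>
    unfolding isolated_count_def by (simp add: sum.inter_filter[symmetric] of_bool_def)
  have "(\<integral>\<omega>. real (isolated_count q A U n L \<omega>) \<partial>M)
      = (\<Sum>u\<in>{1..n}. \<integral>\<omega>. of_bool (\<forall>v\<in>{1..n}. \<not> edge q A U L u v \<omega>) \<partial>M)"
    unfolding count by (rule Bochner_Integration.integral_sum, rule integral_isolated(1)) auto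
  also have "\<dots> = (\<Sum>u\<in>{1..n}. \<Sum>a\<in>binary_vectors L.
      (\<Prod>l\<in>{1..L}. mu (a l)) * (1 - (\<Prod>l\<in>{1..L}. Gam mu q (a l))) ^ (n - 1))"
    by (intro sum.cong refl integral_isolated(2)) auto
  also have "\<dots> = real n * (\<Sum>a\<in>binary_vectors L.
      (\<Prod>l\<in>{1..L}. mu (a l)) * (1 - (\<Prod>l\<in>{1..L}. Gam mu q (a l))) ^ (n - 1))"
    by simp
  also have "(\<Sum>a\<in>binary_vectors L. (\<Prod>l\<in>{1..L}. mu (a l)) * (1 - (\<Prod>l\<in>{1..L}. Gam mu q (a l))) ^ (n - 1))
      = (\<Sum>a\<in>binary_vectors L. mu 1 ^ ones L a * mu 0 ^ (L - ones L a)
          * (1 - Gam mu q 1 ^ ones L a * Gam mu q 0 ^ (L - ones L a)) ^ (n - 1))"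
    by (intro sum.cong refl) (simp only: prod_binary_vector)
  also have "\<dots> = (\<Sum>k\<le>L. of_nat (L choose k) * (mu 1 ^ k * mu 0 ^ (L - k)
      * (1 - Gam mu q 1 ^ k * Gam mu q 0 ^ (L - k)) ^ (n - 1)))"
    by (rule sum_binary_vectors_ones)
  also have "\<dots> = (\<Sum>k\<le>L. Bernstein L k (mu 1) * (1 - Gam mu q 1 ^ k * Gam mu q 0 ^ (L - k)) ^ (n - 1))"
    by (simp add: Bernstein_def mult.assoc mu0)
  finally show ?thesis
    by (simp add: isolated_mean_def)
qed

end

lemma Gam_bounds:
  assumes "0 < mu 0" "0 < mu 1" "mu 0 + mu 1 = 1"
    and "0 < q a 0" "q a 0 < 1" "0 < q a 1" "q a 1 < 1"
  shows "0 < Gam mu q a" "Gam mu q a < 1"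
proof -
  show "0 < Gam mu q a"
    unfolding Gam_def using assms by (intro add_pos_pos mult_pos_pos)
  have "mu 0 * q a 0 + mu 1 * q a 1 < mu 0 * 1 + mu 1 * 1"
    using assms by (intro add_strict_mono mult_strict_left_mono) auto
  then show "Gam mu q a < 1"
    using assms by (simp add: Gam_def)
qed

theorem proposition3:
  fixes M :: "'w measure"
    and mu :: "nat \<Rightarrow> real" and q :: "nat \<Rightarrow> nat \<Rightarrow> real"
    and A :: "nat \<Rightarrow> nat \<Rightarrow> 'w \<Rightarrow> nat" and U :: "nat \<Rightarrow> nat \<Rightarrow> 'w \<Rightarrow> real"
    and \<rho> \<nu> :: real and L :: "nat \<Rightarrow> nat"
  assumes mu: "0 < mu 0" "0 < mu 1" "mu 0 + mu 1 = 1"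
    and q: "\<forall>a\<in>{0,1}. \<forall>b\<in>{0,1}. 0 < q a b \<and> q a b < 1" "q 0 1 = q 1 0"
    and M: "prob_space M"
    and indep: "prob_space.indep_vars M (\<lambda>_. borel) (mag_family A U) mag_index"
    and A_vals: "\<forall>l\<ge>1. \<forall>u\<ge>1. \<forall>\<omega>\<in>space M. A l u \<omega> \<in> {0, 1}"
    and A_dist: "\<forall>l\<ge>1. \<forall>u\<ge>1. measure M {\<omega>\<in>space M. A l u \<omega> = 1} = mu 1"
    and U_dist: "\<forall>u v. 1 \<le> u \<and> u < v \<longrightarrow>
                   distr M borel (U u v) = uniform_measure lborel {0..1::real}"
    and rho: "0 < \<rho>"
    and Gam: "Gam mu q 0 < Gam mu q 1"
    and cond: "1 + \<rho> * ln (mu 0) < 0"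
    and nu: "0 < \<nu>" "\<nu> < mu 1" "1 + \<rho> * ln (G \<nu> (mu 1)) = 0"
    and adm: "admissible \<rho> L"
  shows "(1 + \<rho> * ln (Gam mu q 1 powr \<nu> * Gam mu q 0 powr (1 - \<nu>)) < 0 \<longrightarrow>
            filterlim (\<lambda>n. integral\<^sup>L M (\<lambda>\<omega>. real (isolated_count q A U n (L n) \<omega>))) at_top sequentially)
       \<and> (1 + \<rho> * ln (Gam mu q 1 powr \<nu> * Gam mu q 0 powr (1 - \<nu>)) > 0 \<longrightarrow>
            (\<lambda>n. integral\<^sup>L M (\<lambda>\<omega>. real (isolated_count q A U n (L n) \<omega>))) \<longlonglongrightarrow> 0)"
proof -
  interpret mag_model M mu q A U
    by (rule mag_model.intro[OF M], unfold_locales) (use mu q indep A_vals A_dist U_dist in auto)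
  have g: "0 < Gam mu q 0" "Gam mu q 0 < Gam mu q 1" "Gam mu q 1 < 1"
    using Gam_bounds[OF mu, of q 0] Gam_bounds[OF mu, of q 1] q(1) Gam by auto
  have m: "0 < mu 1" "mu 1 < 1"
    using mu by auto
  note L = admissible_ratio_tendsto[OF adm rho]
  have "ln (Gam mu q 1 powr \<nu> * Gam mu q 0 powr (1 - \<nu>))
      = \<nu> * ln (Gam mu q 1) + (1 - \<nu>) * ln (Gam mu q 0)"
    using g by (simp add: ln_mult ln_powr)
  then show ?thesis
    unfolding integral_isolated_count
    using isolated_mean_at_top[OF m g rho nu L] isolated_mean_tendsto_0[OF m g rho nu L] by simp
qed

end
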